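(* Fix $\lambda\in[0,1]$. Define $f(\mathbf q,\lambda)$ for vectors $\mathbf q=(q_{i,j}^{(k)})_{i\ne j,\,k=\pm1}$ by $$f_{i,j}^{(k)}(\mathbf q,\lambda)=\lambda\Big(p_{i,j}^{(k)}+\sum_{m\ne i,j}p_{i,m}^{(k)}q_{m,j}^{(k)}+\sum_{m\ne i}p_{i,m}^{(-k)}q_{m,i}^{(-k)}q_{i,j}^{(k)}\Big),$$ and define $\mathbf a_0(\lambda)=f(\mathbf 0,\lambda)$, $\mathbf a_{n+1}(\lambda)=f(\mathbf a_n(\lambda),\lambda)$. Then for every $n\ge0$ and every index $(i,j,k)$, $$(\mathbf a_n(\lambda))_{i,j}^{(k)}\le\sum_{m=0}^{2^{n+1}-1}P_{e_i}\big(T(0,A_{i,j}^{(k)})=m\big)\lambda^m.$$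
   Context: Fix an integer $N\ge 3$. Let $\mathcal G_N$ be the groupoid with object set $\{1,\dots,N\}$ generated by arrows $A_{i,j}^{(k)}$, $i\neq j\in\{1,\dots,N\}$, $k\in\{-1,1\}$, with source $i$ and target $j$, subject to the relations $A_{i,j}^{(k)}A_{j,\ell}^{(k)}=A_{i,\ell}^{(k)}$ for all $i,j,\ell$, $k$, with the convention $A_{i,i}^{(k)}:=e_i$ (unit at object $i$). Let $\mathcal A$ be its arrow set. Let $\{W_n\}_{n\ge0}$ be the Markov chain on $\mathcal A$ with $P(W_{n+1}=y\mid W_n=x)=p_{i,j}^{(k)}$ if $x^{-1}y=A_{i,j}^{(k)}$ with $i\ne j$ and $0$ otherwise, where $p_{i,j}^{(k)}\in(0,1)$ and $\sum_{j\ne i}\sum_{k=\pm1}p_{i,j}^{(k)}=1$ for each $i$; $P_x$ denotes the law with $W_0=x$. For $x\in\mathcal A$ let $T(0,x)=\inf\{n\ge0:W_n=W_0x\}$ (possibly $\infty$). *)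

theory Defs
  imports Complex_Main
begin

text \<open>Generators A_{i,j}^{(k)} are encoded as triples (i, j, k) with source i,
  target j and label k in {-1, 1}.  Arrows of the groupoid G_N that are reachable
  by the walk are represented by composable words of generators, modulo the
  congruence generated by the defining relations A_{i,j}^k A_{j,l}^k = A_{i,l}^k
  (with A_{i,i}^k the unit).\<close>

type_synonym gen = "nat \<times> nat \<times> int"

definition gen_ok :: "nat \<Rightarrow> gen \<Rightarrow> bool" where
  "gen_ok N g = (case g of (a, b, k) \<Rightarrow>
     a \<in> {1..N} \<and> b \<in> {1..N} \<and> a \<noteq> b \<and> k \<in> {-1, 1})"

fun path_from :: "nat \<Rightarrow> nat \<Rightarrow> gen list \<Rightarrow> bool" where
  "path_from N v [] = True"
| "path_from N v ((a, b, k) # s) = (a = v \<and> gen_ok N (a, b, k) \<and> path_from N b s)"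

inductive word_step :: "nat \<Rightarrow> gen list \<Rightarrow> gen list \<Rightarrow> bool" for N where
  merge: "\<lbrakk>gen_ok N (i, j, k); gen_ok N (j, l, k); l \<noteq> i\<rbrakk> \<Longrightarrow>
     word_step N (u @ [(i, j, k), (j, l, k)] @ v) (u @ [(i, l, k)] @ v)"
| cancel: "\<lbrakk>gen_ok N (i, j, k); gen_ok N (j, i, k)\<rbrakk> \<Longrightarrow>
     word_step N (u @ [(i, j, k), (j, i, k)] @ v) (u @ v)"

definition word_eq :: "nat \<Rightarrow> gen list \<Rightarrow> gen list \<Rightarrow> bool" where
  "word_eq N = (sup (word_step N) (word_step N)\<inverse>\<inverse>)\<^sup>*\<^sup>*"

text \<open>P_{e_i}(T(0,x) = m): sum over all step sequences of length m from e_i whose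
  product first equals e_i x = x at time m, weighted by the transition probabilities.\<close>
definition hit_prob :: "nat \<Rightarrow> (nat \<Rightarrow> nat \<Rightarrow> int \<Rightarrow> real) \<Rightarrow> nat \<Rightarrow> gen \<Rightarrow> nat \<Rightarrow> real" where
  "hit_prob N p i x m =
     (\<Sum>s \<in> {s. length s = m \<and> path_from N i s \<and> word_eq N s [x]
                \<and> (\<forall>n<m. \<not> word_eq N (take n s) [x])}.
        prod_list (map (\<lambda>(a, b, k). p a b k) s))"

definition fmap :: "nat \<Rightarrow> (nat \<Rightarrow> nat \<Rightarrow> int \<Rightarrow> real) \<Rightarrow> (nat \<Rightarrow> nat \<Rightarrow> int \<Rightarrow> real)
    \<Rightarrow> real \<Rightarrow> nat \<Rightarrow> nat \<Rightarrow> int \<Rightarrow> real" where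
  "fmap N p q lam i j k = lam * (p i j k
      + (\<Sum>m \<in> {1..N} - {i, j}. p i m k * q m j k)
      + (\<Sum>m \<in> {1..N} - {i}. p i m (-k) * q m i (-k) * q i j k))"

primrec aseq :: "nat \<Rightarrow> (nat \<Rightarrow> nat \<Rightarrow> int \<Rightarrow> real) \<Rightarrow> real \<Rightarrow> nat \<Rightarrow> nat \<Rightarrow> nat \<Rightarrow> int \<Rightarrow> real" where
  "aseq N p lam 0 = fmap N p (\<lambda>_ _ _. 0) lam"
| "aseq N p lam (Suc n) = fmap N p (aseq N p lam n) lam"

end

(* A first passage of the walk from e_i to A_{i,j}^{(k)} is either the single step A_{i,j}^{(k)},
   or a step A_{i,m}^{(k)} followed by a first passage from e_m to A_{m,j}^{(k)}, or a step
   A_{i,m}^{(-k)}, a first passage back to e_i, and a first passage to A_{i,j}^{(k)}.  The three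
   families differ in their first step, and first passages are prefix-free, so concatenation is
   injective.  Hence, writing G_L for the generating function of first passages of length at
   most L, the three summands of f(G_L) count disjoint sets of first passages of length at most
   2L + 1: f(G_L) <= G_(2L+1).  As f is monotone and a_0 = f(0), induction gives
   a_n <= G_(2^(n+1)-1).  Equality of arrows is decided by a normal form obtained by reducing the
   word against a stack. *)

theory Submission
  imports Defs
begin

section \<open>Normal forms of words\<close>

definition mergeable :: "nat \<Rightarrow> gen \<Rightarrow> gen \<Rightarrow> bool" where
  "mergeable N h g \<longleftrightarrow> gen_ok N h \<and> gen_ok N g \<and> snd (snd h) = snd (snd g) \<and> fst (snd h) = fst g"

text \<open>Normal forms are stored as stacks: the last letter of the word is the head of the list.\<close>

definition push_gen :: "nat \<Rightarrow> gen list \<Rightarrow> gen \<Rightarrow> gen list" where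
  "push_gen N st g = (case st of [] \<Rightarrow> [g] | h # st' \<Rightarrow>
     if mergeable N h g
     then (if fst h = fst (snd g) then st' else (fst h, fst (snd g), snd (snd g)) # st')
     else g # st)"

definition normal_form :: "nat \<Rightarrow> gen list \<Rightarrow> gen list" where
  "normal_form N s = foldl (push_gen N) [] s"

fun reduced :: "nat \<Rightarrow> gen list \<Rightarrow> bool" where
  "reduced N (g # h # st) \<longleftrightarrow> \<not> mergeable N h g \<and> reduced N (h # st)"
| "reduced N _ \<longleftrightarrow> True"

lemma normal_form_Nil [simp]: "normal_form N [] = []"
  by (simp add: normal_form_def)

lemma normal_form_append: "normal_form N (s @ t) = foldl (push_gen N) (normal_form N s) t"
  by (simp add: normal_form_def)

lemma normal_form_snoc: "normal_form N (s @ [g]) = push_gen N (normal_form N s) g"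
  by (simp add: normal_form_def)

lemma reduced_push_gen: "reduced N st \<Longrightarrow> reduced N (push_gen N st g)"
  by (cases "(N, st)" rule: reduced.cases)
    (auto simp: push_gen_def mergeable_def gen_ok_def split: prod.splits)

lemma reduced_normal_form: "reduced N (normal_form N s)"
  by (induction s rule: rev_induct) (simp_all add: normal_form_snoc reduced_push_gen)

lemma push_gen_merge:
  assumes "reduced N st" "gen_ok N (i, j, k)" "gen_ok N (j, l, k)" "l \<noteq> i"
  shows "push_gen N (push_gen N st (i, j, k)) (j, l, k) = push_gen N st (i, l, k)"
  using assms by (cases "(N, st)" rule: reduced.cases)
    (auto simp: push_gen_def mergeable_def gen_ok_def split: prod.splits)

lemma push_gen_cancel:
  assumes "reduced N st" "gen_ok N (i, j, k)" "gen_ok N (j, i, k)"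
  shows "push_gen N (push_gen N st (i, j, k)) (j, i, k) = st"
  using assms by (cases "(N, st)" rule: reduced.cases)
    (auto simp: push_gen_def mergeable_def gen_ok_def split: prod.splits)

lemma word_step_normal_form: "word_step N s t \<Longrightarrow> normal_form N s = normal_form N t"
  by (induction rule: word_step.induct)
    (simp_all add: normal_form_append reduced_normal_form push_gen_merge push_gen_cancel)

lemma word_eq_normal_form: "word_eq N s t \<Longrightarrow> normal_form N s = normal_form N t"
  unfolding word_eq_def by (induction rule: rtranclp_induct) (auto dest: word_step_normal_form)

lemma equivp_word_eq: "equivp (word_eq N)"
  by (simp add: word_eq_def symclp_pointfree [symmetric])

lemma word_step_imp_word_eq: "word_step N s t \<Longrightarrow> word_eq N s t"
  unfolding word_eq_def by (rule r_into_rtranclp) simp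

lemma word_step_append_context: "word_step N s t \<Longrightarrow> word_step N (u @ s @ v) (u @ t @ v)"
proof (induction rule: word_step.induct)
  case (merge i j k l u' v')
  then show ?case using word_step.merge [of N i j k l "u @ u'" "v' @ v"] by simp
next
  case (cancel i j k u' v')
  then show ?case using word_step.cancel [of N i j k "u @ u'" "v' @ v"] by simp
qed

lemma word_eq_append_context: "word_eq N s t \<Longrightarrow> word_eq N (u @ s @ v) (u @ t @ v)"
  unfolding word_eq_def
proof (induction rule: rtranclp_induct)
  case (step t t')
  then have "(sup (word_step N) (word_step N)\<inverse>\<inverse>) (u @ t @ v) (u @ t' @ v)"
    by (auto intro: word_step_append_context)
  with step.IH show ?case by (rule rtranclp.rtrancl_into_rtrancl)
qed simp

lemma word_eq_snoc_push_gen: "word_eq N (rev st @ [g]) (rev (push_gen N st g))"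
proof (cases "st = [] \<or> \<not> mergeable N (hd st) g")
  case True
  then show ?thesis
    using equivp_reflp [OF equivp_word_eq] by (auto simp: push_gen_def split: list.split)
next
  case False
  then obtain i j k l st' where st: "st = (i, j, k) # st'" and g: "g = (j, l, k)"
    and ok: "gen_ok N (i, j, k)" "gen_ok N (j, l, k)"
    by (cases g, cases st) (auto simp: mergeable_def split: prod.splits)
  show ?thesis
  proof (cases "i = l")
    case True
    then have "word_step N (rev st' @ [(i, j, k), (j, l, k)] @ []) (rev st' @ [])"
      using ok word_step.cancel [of N i j k "rev st'" "[]"] by simp
    with st g ok True show ?thesis by (simp add: push_gen_def mergeable_def word_step_imp_word_eq)
  next
    case False
    then have "word_step N (rev st' @ [(i, j, k), (j, l, k)] @ []) (rev st' @ [(i, l, k)] @ [])"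
      using ok by (intro word_step.merge) auto
    with st g ok False show ?thesis by (simp add: push_gen_def mergeable_def word_step_imp_word_eq)
  qed
qed

lemma word_eq_rev_normal_form: "word_eq N s (rev (normal_form N s))"
proof (induction s rule: rev_induct)
  case Nil
  then show ?case using equivp_reflp [OF equivp_word_eq] by simp
next
  case (snoc g s)
  have "word_eq N (s @ [g]) (rev (normal_form N s) @ [g])"
    using word_eq_append_context [OF snoc.IH, of "[]" "[g]"] by simp
  with word_eq_snoc_push_gen show ?case
    by (metis equivp_transp [OF equivp_word_eq] normal_form_snoc)
qed

theorem word_eq_iff_normal_form: "word_eq N s t \<longleftrightarrow> normal_form N s = normal_form N t"
  by (metis word_eq_normal_form word_eq_rev_normal_form equivp_symp equivp_transp equivp_word_eq)

lemma normal_form_single [simp]: "normal_form N [g] = [g]"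
  by (simp add: normal_form_def push_gen_def)

lemma normal_form_merge:
  assumes "gen_ok N (a, b, k)" "gen_ok N (b, c, k)" "a \<noteq> c"
  shows "normal_form N [(a, b, k), (b, c, k)] = [(a, c, k)]"
  using assms by (simp add: normal_form_def push_gen_def mergeable_def)

lemma normal_form_no_merge:
  assumes "k \<noteq> k'"
  shows "normal_form N [(a, b, k), (b, c, k')] = [(b, c, k'), (a, b, k)]"
  using assms by (simp add: normal_form_def push_gen_def mergeable_def)

lemma normal_form_cancel_Cons:
  assumes "gen_ok N (a, b, k)" "gen_ok N (b, a, k)"
  shows "normal_form N ((a, b, k) # (b, a, k) # w) = normal_form N w"
  using assms normal_form_append [of N "[(a, b, k), (b, a, k)]" w]
  by (simp add: normal_form_def push_gen_def mergeable_def)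

lemma not_word_eq_Nil_single: "\<not> word_eq N [] [g]"
  by (simp add: word_eq_iff_normal_form)

lemma word_eq_Cons: "word_eq N s t \<Longrightarrow> word_eq N (g # s) (g # t)"
  using word_eq_append_context [of N s t "[g]" "[]"] by simp

lemma last_push_gen: "2 \<le> length (push_gen N st g) \<Longrightarrow> st \<noteq> [] \<and> last (push_gen N st g) = last st"
  by (cases st) (auto simp: push_gen_def split: if_splits)

lemma normal_form_prefix_last:
  "normal_form N s \<noteq> [] \<Longrightarrow> \<exists>t \<le> length s. normal_form N (take t s) = [last (normal_form N s)]"
proof (induction s rule: rev_induct)
  case (snoc g s)
  show ?case
  proof (cases "length (normal_form N (s @ [g])) = 1")
    case True
    then show ?thesis by (intro exI [of _ "length (s @ [g])"]) (auto simp: length_Suc_conv)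
  next
    case False
    with snoc.prems have "2 \<le> length (push_gen N (normal_form N s) g)"
      by (cases "normal_form N (s @ [g])") (auto simp: normal_form_snoc Suc_le_eq)
    with last_push_gen have "normal_form N s \<noteq> []"
      and last: "last (normal_form N (s @ [g])) = last (normal_form N s)"
      by (auto simp: normal_form_snoc)
    with snoc.IH obtain t where "t \<le> length s" "normal_form N (take t s) = [last (normal_form N s)]"
      by blast
    with last show ?thesis by (intro exI [of _ t]) auto
  qed
qed simp

fun path_end :: "nat \<Rightarrow> gen list \<Rightarrow> nat" where
  "path_end v [] = v"
| "path_end v ((a, b, k) # s) = path_end b s"

lemma path_from_append:
  "path_from N v (s @ t) \<longleftrightarrow> path_from N v s \<and> path_from N (path_end v s) t"
  by (induction v s rule: path_end.induct) auto

lemma path_end_append: "path_end v (s @ t) = path_end (path_end v s) t"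
  by (induction v s rule: path_end.induct) auto

lemma path_from_push_gen:
  assumes "path_from N v (rev st @ [g])"
  shows "path_from N v (rev (push_gen N st g))
    \<and> path_end v (rev (push_gen N st g)) = path_end v (rev st @ [g])"
  using assms by (cases st)
    (auto simp: push_gen_def path_from_append path_end_append mergeable_def gen_ok_def split: prod.splits)

lemma path_from_normal_form:
  "path_from N v s \<Longrightarrow>
    path_from N v (rev (normal_form N s)) \<and> path_end v (rev (normal_form N s)) = path_end v s"
proof (induction s rule: rev_induct)
  case (snoc g s)
  then have "path_from N v (rev (normal_form N s) @ [g])"
    by (auto simp: path_from_append)
  with snoc show ?case
    using path_from_push_gen by (auto simp: normal_form_snoc path_from_append path_end_append)
qed simp

lemma path_end_word_eq_single:
  "path_from N v s \<Longrightarrow> word_eq N s [(a, b, k)] \<Longrightarrow> path_end v s = b"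
  using path_from_normal_form [of N v s] by (simp add: word_eq_iff_normal_form)

lemma set_path_from: "path_from N v s \<Longrightarrow> set s \<subseteq> {1..N} \<times> {1..N} \<times> {-1, 1}"
  by (induction v s rule: path_end.induct) (auto simp: gen_ok_def)

section \<open>First-passage words\<close>

definition first_passages :: "nat \<Rightarrow> nat \<Rightarrow> gen \<Rightarrow> gen list set" where
  "first_passages N i x =
     {s. path_from N i s \<and> word_eq N s [x] \<and> (\<forall>n<length s. \<not> word_eq N (take n s) [x])}"

lemma single_mem_first_passages: "gen_ok N (i, j, k) \<Longrightarrow> [(i, j, k)] \<in> first_passages N i (i, j, k)"
  by (auto simp: first_passages_def word_eq_iff_normal_form)

lemma word_eq_Cons_merge_iff:
  assumes "gen_ok N (i, m, k)" "gen_ok N (m, j, k)" "i \<noteq> j"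
  shows "word_eq N ((i, m, k) # w) [(i, j, k)] \<longleftrightarrow> word_eq N w [(m, j, k)]"
proof
  assume "word_eq N ((i, m, k) # w) [(i, j, k)]"
  then have "word_eq N ((m, i, k) # (i, m, k) # w) [(m, i, k), (i, j, k)]"
    by (rule word_eq_Cons)
  with assms show "word_eq N w [(m, j, k)]"
    using normal_form_cancel_Cons [of N m i k w] normal_form_merge [of N m i k j]
    by (simp add: word_eq_iff_normal_form gen_ok_def)
next
  assume "word_eq N w [(m, j, k)]"
  then have "word_eq N ((i, m, k) # w) [(i, m, k), (m, j, k)]"
    by (rule word_eq_Cons)
  with assms show "word_eq N ((i, m, k) # w) [(i, j, k)]"
    using normal_form_merge [of N i m k j] by (simp add: word_eq_iff_normal_form)
qed

lemma Cons_mem_first_passages: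
  assumes "gen_ok N (i, m, k)" "gen_ok N (m, j, k)" "i \<noteq> j"
    and s: "s \<in> first_passages N m (m, j, k)"
  shows "(i, m, k) # s \<in> first_passages N i (i, j, k)"
proof -
  from assms have iff: "word_eq N ((i, m, k) # w) [(i, j, k)] \<longleftrightarrow> word_eq N w [(m, j, k)]" for w
    by (intro word_eq_Cons_merge_iff)
  have "\<not> word_eq N (take n ((i, m, k) # s)) [(i, j, k)]" if "n < length ((i, m, k) # s)" for n
    using that s iff by (cases n) (auto simp: first_passages_def not_word_eq_Nil_single)
  with assms s iff show ?thesis by (simp add: first_passages_def)
qed

lemma normal_form_loop_append:
  assumes "gen_ok N (i, m, k)" "word_eq N s [(m, i, k)]"
  shows "normal_form N ((i, m, k) # s @ w) = normal_form N w"
proof -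
  from assms(2) have "word_eq N ((i, m, k) # s) [(i, m, k), (m, i, k)]"
    by (rule word_eq_Cons)
  with assms(1) have "normal_form N ((i, m, k) # s) = []"
    using normal_form_cancel_Cons [of N i m k "[]"]
    by (simp add: word_eq_iff_normal_form gen_ok_def)
  then show ?thesis
    using normal_form_append [of N "(i, m, k) # s" w] by (simp add: normal_form_def)
qed

text \<open>If \<open>(i, m, k')\<close> followed by a proper prefix of \<open>s\<close> reduced to \<open>(i, j, k)\<close>, the prefix
  would reduce to the unmergeable pair \<open>(m, i, k') (i, j, k)\<close>; the bottom letter \<open>(m, i, k')\<close>
  of that stack was the whole stack at an earlier time, contradicting first passage.\<close>

lemma loop_prefix_not_word_eq:
  assumes "gen_ok N (i, m, k')" "gen_ok N (i, j, k)" "k' \<noteq> k"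
    and s: "s \<in> first_passages N m (m, i, k')" and "n < length s"
  shows "\<not> word_eq N ((i, m, k') # take n s) [(i, j, k)]"
proof
  assume "word_eq N ((i, m, k') # take n s) [(i, j, k)]"
  then have "word_eq N ((m, i, k') # (i, m, k') # take n s) [(m, i, k'), (i, j, k)]"
    by (rule word_eq_Cons)
  with assms(1-3) have stack: "normal_form N (take n s) = [(i, j, k), (m, i, k')]"
    using normal_form_cancel_Cons [of N m i k' "take n s"] normal_form_no_merge [of k' k N m i j]
    by (simp add: word_eq_iff_normal_form gen_ok_def)
  then obtain t where "t \<le> n" and t: "normal_form N (take t s) = [(m, i, k')]"
    using normal_form_prefix_last [of N "take n s"] by (auto simp: min_def split: if_splits)
  moreover from stack t have "t \<noteq> n" by auto
  ultimately have "t < length s" "word_eq N (take t s) [(m, i, k')]"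
    using \<open>n < length s\<close> t by (simp_all add: word_eq_iff_normal_form)
  with s show False by (simp add: first_passages_def)
qed

lemma loop_mem_first_passages:
  assumes "gen_ok N (i, m, k')" "gen_ok N (i, j, k)" "k' \<noteq> k"
    and s: "s \<in> first_passages N m (m, i, k')" and t: "t \<in> first_passages N i (i, j, k)"
  shows "(i, m, k') # s @ t \<in> first_passages N i (i, j, k)"
proof -
  have cancel: "normal_form N ((i, m, k') # s @ w) = normal_form N w" for w
    using s assms(1) by (intro normal_form_loop_append) (auto simp: first_passages_def)
  have "path_end m s = i"
    using s by (auto simp: first_passages_def intro: path_end_word_eq_single)
  with assms(1) s t have "path_from N i ((i, m, k') # s @ t)"
    by (simp add: first_passages_def path_from_append)
  moreover have "\<not> word_eq N (take n ((i, m, k') # s @ t)) [(i, j, k)]"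
    if "n < length ((i, m, k') # s @ t)" for n
  proof (cases n)
    case (Suc n')
    show ?thesis
    proof (cases "n' < length s")
      case True
      with Suc assms show ?thesis using loop_prefix_not_word_eq by simp
    next
      case False
      with Suc that t cancel show ?thesis
        by (simp add: first_passages_def word_eq_iff_normal_form)
    qed
  qed (simp add: not_word_eq_Nil_single)
  ultimately show ?thesis
    using t cancel by (simp add: first_passages_def word_eq_iff_normal_form)
qed

lemma first_passages_append_inj: "inj_on (\<lambda>(s, t). s @ t) (first_passages N i x \<times> T)"
proof -
  have not_shorter: "\<not> length s < length s'"
    if s: "s \<in> first_passages N i x" and s': "s' \<in> first_passages N i x" and eq: "s @ t = s' @ t'"
    for s s' t t'
  proof
    assume less: "length s < length s'"
    have "take (length s) (s @ t) = take (length s) (s' @ t')" using eq by (rule arg_cong)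
    with less have prefix: "take (length s) s' = s" by simp
    from s' less have "\<not> word_eq N (take (length s) s') [x]" by (simp add: first_passages_def)
    with prefix s show False by (simp add: first_passages_def)
  qed
  show ?thesis
  proof (rule inj_onI)
    fix p q
    assume "p \<in> first_passages N i x \<times> T" "q \<in> first_passages N i x \<times> T"
      and "(\<lambda>(s, t). s @ t) p = (\<lambda>(s, t). s @ t) q"
    moreover obtain s t s' t' where pq: "p = (s, t)" "q = (s', t')" by (cases p, cases q)
    ultimately have s: "s \<in> first_passages N i x" and s': "s' \<in> first_passages N i x"
      and eq: "s @ t = s' @ t'"
      by auto
    have "\<not> length s < length s'" using s s' eq by (rule not_shorter)
    moreover have "\<not> length s' < length s" using s' s eq [symmetric] by (rule not_shorter)
    ultimately have "length s = length s'" by simp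
    with eq pq show "p = q" by simp
  qed
qed

section \<open>Generating functions of sets of words\<close>

definition weight :: "(nat \<Rightarrow> nat \<Rightarrow> int \<Rightarrow> real) \<Rightarrow> gen list \<Rightarrow> real" where
  "weight p s = prod_list (map (\<lambda>(a, b, k). p a b k) s)"

definition gf :: "(nat \<Rightarrow> nat \<Rightarrow> int \<Rightarrow> real) \<Rightarrow> real \<Rightarrow> gen list set \<Rightarrow> real" where
  "gf p lam S = (\<Sum>s\<in>S. weight p s * lam ^ length s)"

definition first_passages_upto :: "nat \<Rightarrow> nat \<Rightarrow> gen \<Rightarrow> nat \<Rightarrow> gen list set" where
  "first_passages_upto N i x L = {s \<in> first_passages N i x. length s \<le> L}"

definition hit_gf :: "nat \<Rightarrow> (nat \<Rightarrow> nat \<Rightarrow> int \<Rightarrow> real) \<Rightarrow> real \<Rightarrow> nat \<Rightarrow> nat \<Rightarrow> gen \<Rightarrow> real" where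
  "hit_gf N p lam L i x = gf p lam (first_passages_upto N i x L)"

lemma weight_Nil [simp]: "weight p [] = 1"
  by (simp add: weight_def)

lemma weight_Cons [simp]: "weight p ((a, b, k) # s) = p a b k * weight p s"
  by (simp add: weight_def)

lemma weight_append [simp]: "weight p (s @ t) = weight p s * weight p t"
  by (simp add: weight_def)

lemma weight_nonneg:
  assumes "\<And>a b k. gen_ok N (a, b, k) \<Longrightarrow> 0 \<le> p a b k"
  shows "path_from N v s \<Longrightarrow> 0 \<le> weight p s"
  by (induction v s rule: path_end.induct) (simp_all add: assms)

lemma finite_first_passages_upto: "finite (first_passages_upto N i x L)"
proof (rule finite_subset)
  show "first_passages_upto N i x L
      \<subseteq> {s. set s \<subseteq> {1..N} \<times> {1..N} \<times> {-1, 1} \<and> length s \<le> L}"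
    using set_path_from by (auto simp: first_passages_upto_def first_passages_def)
qed (rule finite_lists_length_le, simp)

lemma gf_nonneg: "(\<And>s. s \<in> S \<Longrightarrow> 0 \<le> weight p s) \<Longrightarrow> 0 \<le> lam \<Longrightarrow> 0 \<le> gf p lam S"
  unfolding gf_def by (intro sum_nonneg mult_nonneg_nonneg) auto

lemma gf_mono:
  "finite T \<Longrightarrow> S \<subseteq> T \<Longrightarrow> (\<And>s. s \<in> T \<Longrightarrow> 0 \<le> weight p s) \<Longrightarrow> 0 \<le> lam \<Longrightarrow> gf p lam S \<le> gf p lam T"
  unfolding gf_def by (intro sum_mono2) auto

lemma gf_Cons_image: "gf p lam ((#) (a, b, k) ` S) = lam * p a b k * gf p lam S"
  by (simp add: gf_def sum.reindex sum_distrib_left mult_ac)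

lemma gf_append_image:
  assumes "finite S" "finite T" "inj_on (\<lambda>(s, t). s @ t) (S \<times> T)"
  shows "gf p lam ((\<lambda>(s, t). s @ t) ` (S \<times> T)) = gf p lam S * gf p lam T"
proof -
  have "gf p lam ((\<lambda>(s, t). s @ t) ` (S \<times> T))
      = (\<Sum>(s, t)\<in>S \<times> T. weight p (s @ t) * lam ^ length (s @ t))"
    unfolding gf_def using assms(3) by (simp add: sum.reindex case_prod_unfold)
  also have "\<dots> = (\<Sum>(s, t)\<in>S \<times> T. (weight p s * lam ^ length s) * (weight p t * lam ^ length t))"
    by (intro sum.cong) (auto simp: power_add)
  also have "\<dots> = gf p lam S * gf p lam T"
    by (simp add: gf_def sum_product sum.cartesian_product)
  finally show ?thesis .
qed

lemma gf_fibres_le: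
  assumes "finite S" "finite G" "\<And>s. s \<in> S \<Longrightarrow> 0 \<le> weight p s" "0 \<le> lam"
  shows "(\<Sum>g\<in>G. gf p lam {s \<in> S. h s = g}) \<le> gf p lam S"
proof -
  have "(\<Sum>g\<in>G. gf p lam {s \<in> S. h s = g}) = (\<Sum>g\<in>G. gf p lam {s \<in> {s \<in> S. h s \<in> G}. h s = g})"
    by (intro sum.cong refl arg_cong [where f = "gf p lam"]) auto
  also have "\<dots> = gf p lam {s \<in> S. h s \<in> G}"
    unfolding gf_def using assms(1,2) by (intro sum.group) auto
  also have "\<dots> \<le> gf p lam S"
    using assms by (intro gf_mono) auto
  finally show ?thesis .
qed

lemma sum_hit_prob_eq_hit_gf:
  "(\<Sum>m = 0..L. hit_prob N p i x m * lam ^ m) = hit_gf N p lam L i x"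
proof -
  have "hit_gf N p lam L i x
      = (\<Sum>m = 0..L. \<Sum>s\<in>{s \<in> first_passages_upto N i x L. length s = m}.
           weight p s * lam ^ length s)"
    unfolding hit_gf_def gf_def
    by (intro sum.group [symmetric] finite_first_passages_upto) (auto simp: first_passages_upto_def)
  also have "\<dots> = (\<Sum>m = 0..L. hit_prob N p i x m * lam ^ m)"
  proof (intro sum.cong refl)
    fix m assume "m \<in> {0..L}"
    then have "{s \<in> first_passages_upto N i x L. length s = m}
        = {s. length s = m \<and> path_from N i s \<and> word_eq N s [x]
             \<and> (\<forall>n<m. \<not> word_eq N (take n s) [x])}"
      by (auto simp: first_passages_upto_def first_passages_def)
    then show "(\<Sum>s\<in>{s \<in> first_passages_upto N i x L. length s = m}. weight p s * lam ^ length s)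
        = hit_prob N p i x m * lam ^ m"
      by (simp add: hit_prob_def weight_def sum_distrib_right)
  qed
  finally show ?thesis ..
qed

section \<open>The recursion for the truncated generating functions\<close>

lemma weight_nonneg_first_passages_upto:
  assumes "\<And>a b k. gen_ok N (a, b, k) \<Longrightarrow> 0 \<le> p a b k"
  shows "s \<in> first_passages_upto N i x L \<Longrightarrow> 0 \<le> weight p s"
  using weight_nonneg [OF assms] by (auto simp: first_passages_upto_def first_passages_def)

lemma hit_gf_nonneg:
  assumes "\<And>a b k. gen_ok N (a, b, k) \<Longrightarrow> 0 \<le> p a b k" "0 \<le> lam"
  shows "0 \<le> hit_gf N p lam L i x"
  unfolding hit_gf_def using weight_nonneg_first_passages_upto [OF assms(1)] assms(2)
  by (rule gf_nonneg)

lemma sum_first_steps: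
  fixes k :: int
  assumes "finite V" "k \<noteq> 0"
  shows "(\<Sum>g\<in>insert (i, j, k) ((\<lambda>m. (i, m, k)) ` (V - {i, j}) \<union> (\<lambda>m. (i, m, -k)) ` (V - {i})). H g)
    = H (i, j, k) + (\<Sum>m\<in>V - {i, j}. H (i, m, k)) + (\<Sum>m\<in>V - {i}. H (i, m, -k))"
proof -
  from assms(2) have "-k \<noteq> k" by simp
  with assms(1) have "(\<Sum>g\<in>(\<lambda>m. (i, m, k)) ` (V - {i, j}) \<union> (\<lambda>m. (i, m, -k)) ` (V - {i}). H g)
      = (\<Sum>m\<in>V - {i, j}. H (i, m, k)) + (\<Sum>m\<in>V - {i}. H (i, m, -k))"
    by (subst sum.union_disjoint) (auto simp: sum.reindex inj_on_def)
  moreover from \<open>-k \<noteq> k\<close>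
  have "(i, j, k) \<notin> (\<lambda>m. (i, m, k)) ` (V - {i, j}) \<union> (\<lambda>m. (i, m, -k)) ` (V - {i})"
    by auto
  ultimately show ?thesis using assms(1) by (simp add: add.assoc)
qed

lemma gf_le_gf_head_fibre:
  assumes "\<And>a b k. gen_ok N (a, b, k) \<Longrightarrow> 0 \<le> p a b k" "0 \<le> lam"
    and "S \<subseteq> first_passages_upto N i x L" "\<forall>s\<in>S. hd s = g"
  shows "gf p lam S \<le> gf p lam {s \<in> first_passages_upto N i x L. hd s = g}"
proof (rule gf_mono)
  show "finite {s \<in> first_passages_upto N i x L. hd s = g}"
    by (rule finite_subset [OF _ finite_first_passages_upto]) auto
  show "0 \<le> weight p s" if "s \<in> {s \<in> first_passages_upto N i x L. hd s = g}" for s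
    using that weight_nonneg_first_passages_upto [of N p, OF assms(1)] by blast
qed (use assms in auto)

lemma gf_single_step_le:
  assumes "\<And>a b k. gen_ok N (a, b, k) \<Longrightarrow> 0 \<le> p a b k" "0 \<le> lam" "gen_ok N (i, j, k)" "0 < L"
  shows "lam * p i j k \<le> gf p lam {s \<in> first_passages_upto N i (i, j, k) L. hd s = (i, j, k)}"
proof -
  have "{[(i, j, k)]} \<subseteq> first_passages_upto N i (i, j, k) L"
    using assms(3,4) single_mem_first_passages by (simp add: first_passages_upto_def)
  then have "gf p lam {[(i, j, k)]}
      \<le> gf p lam {s \<in> first_passages_upto N i (i, j, k) L. hd s = (i, j, k)}"
    by (intro gf_le_gf_head_fibre assms(1,2)) auto
  then show ?thesis by (simp add: gf_def mult.commute)
qed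

lemma gf_Cons_first_passages_le:
  assumes "\<And>a b k. gen_ok N (a, b, k) \<Longrightarrow> 0 \<le> p a b k" "0 \<le> lam"
    and "gen_ok N (i, m, k)" "gen_ok N (m, j, k)" "i \<noteq> j" "L < L'"
  shows "lam * (p i m k * hit_gf N p lam L m (m, j, k))
    \<le> gf p lam {s \<in> first_passages_upto N i (i, j, k) L'. hd s = (i, m, k)}"
proof -
  have "(#) (i, m, k) ` first_passages_upto N m (m, j, k) L \<subseteq> first_passages_upto N i (i, j, k) L'"
    using assms(3-6) Cons_mem_first_passages by (auto simp: first_passages_upto_def)
  then have "gf p lam ((#) (i, m, k) ` first_passages_upto N m (m, j, k) L)
      \<le> gf p lam {s \<in> first_passages_upto N i (i, j, k) L'. hd s = (i, m, k)}"
    by (intro gf_le_gf_head_fibre assms(1,2)) auto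
  then show ?thesis by (simp add: gf_Cons_image hit_gf_def mult.assoc)
qed

lemma gf_loop_first_passages_le:
  assumes "\<And>a b k. gen_ok N (a, b, k) \<Longrightarrow> 0 \<le> p a b k" "0 \<le> lam"
    and "gen_ok N (i, m, k')" "gen_ok N (i, j, k)" "k' \<noteq> k" "2 * L < L'"
  shows "lam * (p i m k' * hit_gf N p lam L m (m, i, k') * hit_gf N p lam L i (i, j, k))
    \<le> gf p lam {s \<in> first_passages_upto N i (i, j, k) L'. hd s = (i, m, k')}"
proof -
  let ?S = "first_passages_upto N m (m, i, k') L" and ?T = "first_passages_upto N i (i, j, k) L"
  let ?loops = "(#) (i, m, k') ` (\<lambda>(s, t). s @ t) ` (?S \<times> ?T)"
  have "inj_on (\<lambda>(s, t). s @ t) (?S \<times> ?T)"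
    by (rule inj_on_subset [OF first_passages_append_inj]) (auto simp: first_passages_upto_def)
  then have gf_loops: "gf p lam ?loops
      = lam * (p i m k' * hit_gf N p lam L m (m, i, k') * hit_gf N p lam L i (i, j, k))"
    by (simp add: gf_Cons_image gf_append_image finite_first_passages_upto hit_gf_def mult_ac)
  have "?loops \<subseteq> first_passages_upto N i (i, j, k) L'"
    using assms(3-6) loop_mem_first_passages by (auto simp: first_passages_upto_def)
  then have "gf p lam ?loops
      \<le> gf p lam {s \<in> first_passages_upto N i (i, j, k) L'. hd s = (i, m, k')}"
    by (intro gf_le_gf_head_fibre assms(1,2)) auto
  with gf_loops show ?thesis by simp
qed

text \<open>The three summands of \<open>fmap\<close> are the generating functions of the first passages that
  start with the step \<open>(i, j, k)\<close>, with a step \<open>(i, m, k)\<close> followed by a first passage to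
  \<open>(m, j, k)\<close>, and with a step \<open>(i, m, -k)\<close>, a return to \<open>i\<close> and a first passage to
  \<open>(i, j, k)\<close>; the first step tells the three families apart.\<close>

lemma fmap_hit_gf_le:
  assumes p_nonneg: "\<And>a b k. gen_ok N (a, b, k) \<Longrightarrow> 0 \<le> p a b k" and "0 \<le> lam"
    and ijk: "gen_ok N (i, j, k)"
  shows "fmap N p (\<lambda>a b c. hit_gf N p lam L a (a, b, c)) lam i j k
    \<le> hit_gf N p lam (Suc (2 * L)) i (i, j, k)"
proof -
  let ?G = "\<lambda>a x. hit_gf N p lam L a x"
  let ?B = "first_passages_upto N i (i, j, k) (Suc (2 * L))"
  define H where "H g = gf p lam {s \<in> ?B. hd s = g}" for g
  have k: "k \<noteq> 0" "-k \<noteq> k" using ijk by (auto simp: gen_ok_def)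
  have "fmap N p (\<lambda>a b c. ?G a (a, b, c)) lam i j k
      = lam * p i j k + (\<Sum>m\<in>{1..N} - {i, j}. lam * (p i m k * ?G m (m, j, k)))
        + (\<Sum>m\<in>{1..N} - {i}. lam * (p i m (-k) * ?G m (m, i, -k) * ?G i (i, j, k)))"
    by (simp add: fmap_def distrib_left sum_distrib_left)
  also have "\<dots> \<le> H (i, j, k) + (\<Sum>m\<in>{1..N} - {i, j}. H (i, m, k)) + (\<Sum>m\<in>{1..N} - {i}. H (i, m, -k))"
    unfolding H_def using ijk k
    by (intro add_mono sum_mono gf_single_step_le gf_Cons_first_passages_le
        gf_loop_first_passages_le p_nonneg \<open>0 \<le> lam\<close>) (auto simp: gen_ok_def)
  also have "\<dots> = (\<Sum>g\<in>insert (i, j, k) ((\<lambda>m. (i, m, k)) ` ({1..N} - {i, j})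
      \<union> (\<lambda>m. (i, m, -k)) ` ({1..N} - {i})). H g)"
    using k by (simp add: sum_first_steps)
  also have "\<dots> \<le> gf p lam ?B"
    unfolding H_def using finite_first_passages_upto weight_nonneg_first_passages_upto [OF p_nonneg]
    by (intro gf_fibres_le \<open>0 \<le> lam\<close>) auto
  finally show ?thesis by (simp add: hit_gf_def)
qed

lemma fmap_nonneg:
  assumes "\<And>a b k. gen_ok N (a, b, k) \<Longrightarrow> 0 \<le> p a b k" "0 \<le> lam"
    and "\<And>a b c. gen_ok N (a, b, c) \<Longrightarrow> 0 \<le> q a b c" "gen_ok N (i, j, k)"
  shows "0 \<le> fmap N p q lam i j k"
  unfolding fmap_def using assms
  by (intro mult_nonneg_nonneg add_nonneg_nonneg sum_nonneg) (auto simp: gen_ok_def)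

lemma fmap_mono:
  assumes "\<And>a b k. gen_ok N (a, b, k) \<Longrightarrow> 0 \<le> p a b k" "0 \<le> lam"
    and "\<And>a b c. gen_ok N (a, b, c) \<Longrightarrow> 0 \<le> q a b c \<and> q a b c \<le> q' a b c" "gen_ok N (i, j, k)"
  shows "fmap N p q lam i j k \<le> fmap N p q' lam i j k"
proof -
  have "0 \<le> q' a b c" if "gen_ok N (a, b, c)" for a b c
    using assms(3) [OF that] by linarith
  with assms show ?thesis
    unfolding fmap_def
    by (intro mult_left_mono add_mono sum_mono mult_mono order.refl mult_nonneg_nonneg)
      (auto simp: gen_ok_def)
qed

lemma fmap_le_hit_gf:
  assumes "\<And>a b k. gen_ok N (a, b, k) \<Longrightarrow> 0 \<le> p a b k" "0 \<le> lam"
    and "\<And>a b c. gen_ok N (a, b, c) \<Longrightarrow> 0 \<le> q a b c \<and> q a b c \<le> hit_gf N p lam L a (a, b, c)"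
    and "gen_ok N (i, j, k)"
  shows "0 \<le> fmap N p q lam i j k \<and> fmap N p q lam i j k \<le> hit_gf N p lam (Suc (2 * L)) i (i, j, k)"
  using fmap_nonneg [OF assms(1,2) _ assms(4)] fmap_mono [OF assms]
    fmap_hit_gf_le [OF assms(1,2,4), where L = L] assms(3)
  by fastforce

lemma aseq_le_hit_gf:
  assumes "\<And>a b k. gen_ok N (a, b, k) \<Longrightarrow> 0 \<le> p a b k" "0 \<le> lam"
  shows "gen_ok N (i, j, k) \<Longrightarrow>
    0 \<le> aseq N p lam n i j k \<and> aseq N p lam n i j k \<le> hit_gf N p lam (2 ^ (n + 1) - 1) i (i, j, k)"
proof (induction n arbitrary: i j k)
  case 0
  then show ?case
    using fmap_le_hit_gf [OF assms, where q = "\<lambda>_ _ _. 0" and L = 0] hit_gf_nonneg [OF assms]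
    by simp
next
  case (Suc n)
  have "Suc (2 * (2 ^ (n + 1) - 1)) = 2 ^ (Suc n + 1) - (1::nat)"
    by (induction n) auto
  with Suc show ?case
    using fmap_le_hit_gf [OF assms, where q = "aseq N p lam n" and L = "2 ^ (n + 1) - 1"] by simp
qed

theorem lemmaA2:
  fixes N :: nat and p :: "nat \<Rightarrow> nat \<Rightarrow> int \<Rightarrow> real" and lam :: real
    and n i j :: nat and k :: int
  assumes "N \<ge> 3"
    and "\<And>a b k. a \<in> {1..N} \<Longrightarrow> b \<in> {1..N} \<Longrightarrow> a \<noteq> b \<Longrightarrow> k \<in> {-1, 1}
           \<Longrightarrow> 0 < p a b k \<and> p a b k < 1"
    and "\<And>a. a \<in> {1..N} \<Longrightarrow> (\<Sum>b \<in> {1..N} - {a}. \<Sum>k \<in> {-1, 1}. p a b k) = 1"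
    and "0 \<le> lam" and "lam \<le> 1"
    and "i \<in> {1..N}" and "j \<in> {1..N}" and "i \<noteq> j" and "k \<in> {-1, 1}"
  shows "aseq N p lam n i j k \<le> (\<Sum>m = 0..2^(n+1) - 1. hit_prob N p i (i, j, k) m * lam ^ m)"
proof -
  have p_nonneg: "0 \<le> p a b c" if "gen_ok N (a, b, c)" for a b c
    using assms(2) [of a b c] that by (auto simp: gen_ok_def)
  have "gen_ok N (i, j, k)"
    using assms(6-9) by (simp add: gen_ok_def)
  with aseq_le_hit_gf [OF p_nonneg assms(4)] show ?thesis
    by (simp add: sum_hit_prob_eq_hit_gf)
qed

end
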